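(* The Shapley cost sharing mechanism is REP-expanded.
   Context: GND instance: finite resource set $E$; players $i \in [N]$ with strategy collections $P_i \subseteq 2^E$ and weight vectors $w_i \in \mathbb{Z}_{\geq 1}^E$; constants $q\in\mathbb{Z}_{\ge1}$, $\alpha_1,\dots,\alpha_q > 1$; for each $e$, $\sigma_e \geq 0$, $\xi_{e,j} \geq 0$ (at least one positive), and $F_e(0)=0$, $F_e(l)=\sigma_e+\sum_j \xi_{e,j} l^{\alpha_j}$ for $l>0$. Profile $p=(p_1,\dots,p_N)$, $p_i\in P_i$; load $l_e^p=\sum_{i: e\in p_i} w_i(e)$; $S_e=\{i: e\in p_i\}$. Shapley cost sharing: for $e\in p_i$, $f_{i,e}(p)=\mathbb{E}\big[F_e\big(\sum_{i'\in S_e^i(\pi_e)}w_{i'}(e)+w_i(e)\big)-F_e\big(\sum_{i'\in S_e^i(\pi_e)}w_{i'}(e)\big)\big]$, where $\pi_e$ is a uniformly random permutation of $S_e$ and $S_e^i(\pi_e)$ is the set of players preceding $i$ in $\pi_e$; $f_{i,e}(p)=0$ if $e\notin p_i$. A cost sharing mechanism $M=\{f_{i,e}\}$ is REP-expanded if for each $j\in[q]$ there are a nonnegative integer $K_j$ and nonnegative constants $x_{k,j}\in[0,\alpha_j-1]$, $y_{k,j}\in[1,\alpha_j]$, $z_{k,j}$ ($k\in[K_j]$), depending only on $\alpha_j$, with $x_{k,j}+y_{k,j}=\alpha_j$, such that for every profile $p$, player $i$ and resource $e\in p_i$: $$f_{i,e}(p)\le \sigma_e+\sum_{j\in[q]}\xi_{e,j}\sum_{k=1}^{K_j}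 z_{k,j}\,(l_e^p-w_i(e))^{x_{k,j}}(w_i(e))^{y_{k,j}}.$$ *)

theory Defs
  imports Complex_Main "HOL-Combinatorics.Multiset_Permutations"
begin

(* Real power with the convention 0^0 = 1 (used for (l - w)^x (w)^y in the REP bound,
   where the bases are nonnegative). Isabelle's powr has 0 powr 0 = 0, hence this wrapper. *)
definition rpow :: "real \<Rightarrow> real \<Rightarrow> real" where
  "rpow b a = (if b = 0 then (if a = 0 then 1 else 0) else b powr a)"

definition gnd_cost :: "nat \<Rightarrow> (nat \<Rightarrow> real) \<Rightarrow> real \<Rightarrow> (nat \<Rightarrow> real) \<Rightarrow> real \<Rightarrow> real" where
  "gnd_cost q \<alpha> \<sigma>e \<xi>e l = (if l = 0 then 0 else \<sigma>e + (\<Sum>j=1..q. \<xi>e j * l powr \<alpha> j))"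

definition pred_weight :: "(nat \<Rightarrow> real) \<Rightarrow> nat list \<Rightarrow> nat \<Rightarrow> real" where
  "pred_weight wt \<pi> i = sum_list (map wt (takeWhile (\<lambda>x. x \<noteq> i) \<pi>))"

definition shapley_share :: "(real \<Rightarrow> real) \<Rightarrow> nat set \<Rightarrow> (nat \<Rightarrow> real) \<Rightarrow> nat \<Rightarrow> real" where
  "shapley_share F S wt i =
     (if i \<in> S then
        (\<Sum>\<pi>\<in>permutations_of_set S. F (pred_weight wt \<pi> i + wt i) - F (pred_weight wt \<pi> i))
          / real (card (permutations_of_set S))
      else 0)"

definition users :: "nat \<Rightarrow> (nat \<Rightarrow> nat set) \<Rightarrow> nat \<Rightarrow> nat set" where
  "users N p e = {i \<in> {1..N}. e \<in> p i}"

definition load :: "nat \<Rightarrow> (nat \<Rightarrow> nat set) \<Rightarrow> (nat \<Rightarrow> nat \<Rightarrow> nat) \<Rightarrow> nat \<Rightarrow> real" where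
  "load N p w e = (\<Sum>i\<in>users N p e. real (w i e))"

definition shapley_cost :: "nat \<Rightarrow> (nat \<Rightarrow> real) \<Rightarrow> (nat \<Rightarrow> real) \<Rightarrow> (nat \<Rightarrow> nat \<Rightarrow> real)
    \<Rightarrow> nat \<Rightarrow> (nat \<Rightarrow> nat \<Rightarrow> nat) \<Rightarrow> (nat \<Rightarrow> nat set) \<Rightarrow> nat \<Rightarrow> nat \<Rightarrow> real" where
  "shapley_cost q \<alpha> \<sigma> \<xi> N w p i e =
     shapley_share (gnd_cost q \<alpha> (\<sigma> e) (\<xi> e)) (users N p e) (\<lambda>i'. real (w i' e)) i"

definition gnd_instance :: "nat set \<Rightarrow> nat \<Rightarrow> (nat \<Rightarrow> nat set set) \<Rightarrow> (nat \<Rightarrow> nat \<Rightarrow> nat)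
    \<Rightarrow> nat \<Rightarrow> (nat \<Rightarrow> real) \<Rightarrow> (nat \<Rightarrow> real) \<Rightarrow> (nat \<Rightarrow> nat \<Rightarrow> real) \<Rightarrow> bool" where
  "gnd_instance E N P w q \<alpha> \<sigma> \<xi> \<longleftrightarrow>
     finite E \<and> (\<forall>i\<in>{1..N}. P i \<subseteq> Pow E) \<and>
     (\<forall>i\<in>{1..N}. \<forall>e\<in>E. w i e \<ge> 1) \<and>
     q \<ge> 1 \<and> (\<forall>j\<in>{1..q}. \<alpha> j > 1) \<and>
     (\<forall>e\<in>E. \<sigma> e \<ge> 0 \<and> (\<forall>j\<in>{1..q}. \<xi> e j \<ge> 0) \<and> (\<exists>j\<in>{1..q}. \<xi> e j > 0))"

definition is_profile :: "nat \<Rightarrow> (nat \<Rightarrow> nat set set) \<Rightarrow> (nat \<Rightarrow> nat set) \<Rightarrow> bool" where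
  "is_profile N P p \<longleftrightarrow> (\<forall>i\<in>{1..N}. p i \<in> P i)"

end

theory Submission imports Defs begin

(* A Shapley share is an average of marginal costs F(A + w) - F(A) with 0 <= A <= l - w, where
   l is the load and w the player's weight.  For the power term l^a the mean value theorem bounds
   such a marginal cost by a w l^(a-1), and l^(a-1) <= 2^(a-1) ((l - w)^(a-1) + w^(a-1)).  Hence
   K = 2 terms suffice, with exponent pairs (a-1, 1), (0, a) and coefficient a 2^(a-1). *)

lemma powr_add_le_two_powr:
  fixes x w c :: real
  assumes "0 \<le> x" "0 < w" "0 \<le> c"
  shows "(x + w) powr c \<le> 2 powr c * (x powr c + w powr c)"
proof -
  define m where "m = max x w"
  have m_pos: "0 < m" using assms by (simp add: m_def)
  have "(x + w) powr c \<le> (2 * m) powr c"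
    by (rule powr_mono2) (use assms in \<open>auto simp: m_def\<close>)
  also have "\<dots> = 2 powr c * m powr c" by (simp add: powr_mult m_pos)
  also have "m powr c \<le> x powr c + w powr c"
    by (cases "x \<le> w") (auto simp: m_def max_def)
  hence "2 powr c * m powr c \<le> 2 powr c * (x powr c + w powr c)" by simp
  finally show ?thesis .
qed

lemma powr_increment_le:
  fixes a A w :: real
  assumes a: "1 \<le> a" and A: "0 \<le> A" and w: "0 < w"
  shows "(A + w) powr a - A powr a \<le> a * w * (A + w) powr (a - 1)"
proof (cases "A = 0")
  case True
  have "w powr a = w * w powr (a - 1)"
    using w by (simp add: powr_diff field_simps)
  moreover have "0 \<le> w * w powr (a - 1)" using w by simp
  ultimately show ?thesis using True a
    by (simp add: mult.assoc mult_le_cancel_right1)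
next
  case False
  hence A_pos: "0 < A" using A by simp
  have "\<exists>z>A. z < A + w \<and> (A + w) powr a - A powr a = (A + w - A) * (a * z powr (a - 1))"
    by (rule MVT2) (use w A_pos in \<open>auto intro!: has_real_derivative_powr\<close>)
  then obtain z where z: "A < z" "z < A + w" "(A + w) powr a - A powr a = w * (a * z powr (a - 1))"
    by auto
  have "z powr (a - 1) \<le> (A + w) powr (a - 1)"
    by (rule powr_mono2) (use z a A_pos in auto)
  thus ?thesis using z(3) a w by (simp add: mult_left_mono)
qed

lemma powr_increment_le_rep:
  fixes a A x w :: real
  assumes a: "1 \<le> a" and A: "0 \<le> A" "A \<le> x" and w: "0 < w"
  shows "(A + w) powr a - A powr a \<le> a * 2 powr (a - 1) * (x powr (a - 1) * w + w powr a)"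
proof -
  have "(A + w) powr (a - 1) \<le> (x + w) powr (a - 1)"
    by (rule powr_mono2) (use A a w in auto)
  also have "\<dots> \<le> 2 powr (a - 1) * (x powr (a - 1) + w powr (a - 1))"
    by (rule powr_add_le_two_powr) (use A a w in auto)
  finally have "a * w * (A + w) powr (a - 1) \<le> a * w * (2 powr (a - 1) * (x powr (a - 1) + w powr (a - 1)))"
    using a w by (simp add: mult_left_mono)
  also have "\<dots> = a * 2 powr (a - 1) * (x powr (a - 1) * w + w powr a)"
    using w by (simp add: powr_diff field_simps)
  finally show ?thesis using powr_increment_le[OF a A(1) w] by linarith
qed

lemma gnd_cost_increment_le:
  assumes \<sigma>: "0 \<le> \<sigma>e" and coeffs: "\<forall>j\<in>{1..q}. 0 \<le> \<xi>e j \<and> 1 < \<alpha> j"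
    and A: "0 \<le> A" "A \<le> x" and w: "0 < w"
  shows "gnd_cost q \<alpha> \<sigma>e \<xi>e (A + w) - gnd_cost q \<alpha> \<sigma>e \<xi>e A \<le>
     \<sigma>e + (\<Sum>j=1..q. \<xi>e j * (\<alpha> j * 2 powr (\<alpha> j - 1) * (x powr (\<alpha> j - 1) * w + w powr \<alpha> j)))"
proof -
  have "gnd_cost q \<alpha> \<sigma>e \<xi>e (A + w) - gnd_cost q \<alpha> \<sigma>e \<xi>e A \<le>
     \<sigma>e + (\<Sum>j=1..q. \<xi>e j * ((A + w) powr \<alpha> j - A powr \<alpha> j))"
    using w A \<sigma> by (cases "A = 0") (simp_all add: gnd_cost_def sum_subtractf[symmetric] right_diff_distrib)
  also have "\<dots> \<le> \<sigma>e + (\<Sum>j=1..q. \<xi>e j * (\<alpha> j * 2 powr (\<alpha> j - 1) * (x powr (\<alpha> j - 1) * w + w powr \<alpha> j)))"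
    using coeffs A w
    by (intro add_left_mono sum_mono mult_left_mono powr_increment_le_rep) (auto simp: less_imp_le)
  finally show ?thesis .
qed

lemma pred_weight_bounds:
  assumes "\<pi> \<in> permutations_of_set S" "finite S" "i \<in> S" "\<forall>k\<in>S. 0 \<le> wt k"
  shows "0 \<le> pred_weight wt \<pi> i" "pred_weight wt \<pi> i \<le> sum wt (S - {i})"
proof -
  have \<pi>: "distinct \<pi>" "set \<pi> = S" using assms(1) by (auto dest: permutations_of_setD)
  let ?T = "set (takeWhile (\<lambda>x. x \<noteq> i) \<pi>)"
  have eq: "pred_weight wt \<pi> i = sum wt ?T"
    unfolding pred_weight_def using \<pi> by (simp add: sum_list_distinct_conv_sum_set)
  have sub: "?T \<subseteq> S - {i}" using \<pi> by (auto dest: set_takeWhileD)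
  show "0 \<le> pred_weight wt \<pi> i" unfolding eq using sub assms(4)
    by (intro sum_nonneg) auto
  show "pred_weight wt \<pi> i \<le> sum wt (S - {i})" unfolding eq
    by (rule sum_mono2) (use sub assms in auto)
qed

lemma shapley_share_le:
  assumes "finite S" "i \<in> S" "\<forall>k\<in>S. 0 \<le> wt k"
    and "\<And>A. 0 \<le> A \<Longrightarrow> A \<le> sum wt (S - {i}) \<Longrightarrow> F (A + wt i) - F A \<le> B"
  shows "shapley_share F S wt i \<le> B"
proof -
  let ?P = "permutations_of_set S"
  have card_pos: "0 < real (card ?P)" using assms(1) by simp
  have "(\<Sum>\<pi>\<in>?P. F (pred_weight wt \<pi> i + wt i) - F (pred_weight wt \<pi> i)) \<le> real (card ?P) * B"
    using sum_bounded_above[of ?P _ B] assms pred_weight_bounds[OF _ assms(1-3)] by simp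
  thus ?thesis using assms(2) card_pos unfolding shapley_share_def
    by (simp add: divide_le_eq mult.commute)
qed

definition shapley_rep_x :: "real \<Rightarrow> nat \<Rightarrow> real" where
  "shapley_rep_x a k = (if k = 1 then a - 1 else 0)"

definition shapley_rep_y :: "real \<Rightarrow> nat \<Rightarrow> real" where
  "shapley_rep_y a k = (if k = 1 then 1 else a)"

definition shapley_rep_z :: "real \<Rightarrow> nat \<Rightarrow> real" where
  "shapley_rep_z a k = a * 2 powr (a - 1)"

lemma shapley_rep_sum_eq:
  assumes a: "1 < a" and w: "0 < w"
  shows "(\<Sum>k=1..2. shapley_rep_z a k * rpow x (shapley_rep_x a k) * rpow w (shapley_rep_y a k))
       = a * 2 powr (a - 1) * (x powr (a - 1) * w + w powr a)"
proof -
  have "rpow x (a - 1) = x powr (a - 1)" "rpow x 0 = 1"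
       "rpow w 1 = w" "rpow w a = w powr a"
    using a w by (auto simp: rpow_def)
  moreover have "{1..2::nat} = {1, 2}" by auto
  ultimately show ?thesis
    by (simp add: shapley_rep_x_def shapley_rep_y_def shapley_rep_z_def algebra_simps)
qed

lemma shapley_cost_le:
  assumes g: "gnd_instance E N P w q \<alpha> \<sigma> \<xi>" and p: "is_profile N P p"
    and i: "i \<in> {1..N}" and e: "e \<in> p i"
  shows "shapley_cost q \<alpha> \<sigma> \<xi> N w p i e \<le> \<sigma> e + (\<Sum>j=1..q. \<xi> e j *
           (\<alpha> j * 2 powr (\<alpha> j - 1) * ((load N p w e - real (w i e)) powr (\<alpha> j - 1) * real (w i e)
             + real (w i e) powr \<alpha> j)))"
proof -
  define S where "S = users N p e"
  define wt where "wt = (\<lambda>i'. real (w i' e))"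
  have eE: "e \<in> E" using g p i e unfolding gnd_instance_def is_profile_def by blast
  have fin: "finite S" unfolding S_def users_def by simp
  have iS: "i \<in> S" unfolding S_def users_def using i e by simp
  have wt_ge: "\<forall>k\<in>S. 1 \<le> wt k" using g eE unfolding S_def users_def wt_def gnd_instance_def by auto
  hence wt_nonneg: "\<forall>k\<in>S. 0 \<le> wt k" by fastforce
  have wt_i: "real (w i e) = wt i" by (simp add: wt_def)
  have load_eq: "load N p w e - wt i = sum wt (S - {i})"
    unfolding load_def S_def[symmetric] using fin iS by (simp add: sum_diff1 wt_def)
  have wt_i_pos: "0 < wt i" using wt_ge iS by fastforce
  have \<sigma>: "0 \<le> \<sigma> e" and coeffs: "\<forall>j\<in>{1..q}. 0 \<le> \<xi> e j \<and> 1 < \<alpha> j"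
    using g eE unfolding gnd_instance_def by auto
  show ?thesis
    unfolding shapley_cost_def wt_i load_eq S_def[symmetric] wt_def[symmetric]
    by (intro shapley_share_le[OF fin iS wt_nonneg] gnd_cost_increment_le[OF \<sigma> coeffs _ _ wt_i_pos])
qed

theorem lemma6p3:
  "\<exists>(K :: real \<Rightarrow> nat) (X :: real \<Rightarrow> nat \<Rightarrow> real) (Y :: real \<Rightarrow> nat \<Rightarrow> real) (Z :: real \<Rightarrow> nat \<Rightarrow> real).
     (\<forall>a. a > 1 \<longrightarrow> (\<forall>k\<in>{1..K a}.
          0 \<le> X a k \<and> X a k \<le> a - 1 \<and> 1 \<le> Y a k \<and> Y a k \<le> a \<and>
          X a k + Y a k = a \<and> 0 \<le> Z a k)) \<and>
     (\<forall>E N P w q \<alpha> \<sigma> \<xi> p i e.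
        gnd_instance E N P w q \<alpha> \<sigma> \<xi> \<longrightarrow> is_profile N P p \<longrightarrow>
        i \<in> {1..N} \<longrightarrow> e \<in> p i \<longrightarrow>
        shapley_cost q \<alpha> \<sigma> \<xi> N w p i e
          \<le> \<sigma> e + (\<Sum>j=1..q. \<xi> e j * (\<Sum>k=1..K (\<alpha> j).
                 Z (\<alpha> j) k * rpow (load N p w e - real (w i e)) (X (\<alpha> j) k)
                             * rpow (real (w i e)) (Y (\<alpha> j) k))))"
proof (rule exI[of _ "\<lambda>_. 2"], rule exI[of _ shapley_rep_x], rule exI[of _ shapley_rep_y],
    rule exI[of _ shapley_rep_z], intro conjI allI impI)
  show "\<forall>k\<in>{1..2}. 0 \<le> shapley_rep_x a k \<and> shapley_rep_x a k \<le> a - 1 \<and> 1 \<le> shapley_rep_y a k \<and>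
          shapley_rep_y a k \<le> a \<and> shapley_rep_x a k + shapley_rep_y a k = a \<and> 0 \<le> shapley_rep_z a k"
    if "1 < a" for a :: real
    using that by (auto simp: shapley_rep_x_def shapley_rep_y_def shapley_rep_z_def)
next
  fix E N P w q \<alpha> \<sigma> \<xi> p i e
  assume g: "gnd_instance E N P w q \<alpha> \<sigma> \<xi>" and p: "is_profile N P p"
    and i: "i \<in> {1..N}" and e: "e \<in> p i"
  have "e \<in> E" using g p i e unfolding gnd_instance_def is_profile_def by blast
  hence w_pos: "0 < real (w i e)" and \<alpha>: "\<forall>j\<in>{1..q}. 1 < \<alpha> j"
    using g i unfolding gnd_instance_def by fastforce+
  note shapley_cost_le[OF g p i e]
  also have "\<sigma> e + (\<Sum>j=1..q. \<xi> e j * (\<alpha> j * 2 powr (\<alpha> j - 1) *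
        ((load N p w e - real (w i e)) powr (\<alpha> j - 1) * real (w i e) + real (w i e) powr \<alpha> j)))
      = \<sigma> e + (\<Sum>j=1..q. \<xi> e j * (\<Sum>k=1..2.
                 shapley_rep_z (\<alpha> j) k * rpow (load N p w e - real (w i e)) (shapley_rep_x (\<alpha> j) k)
                             * rpow (real (w i e)) (shapley_rep_y (\<alpha> j) k)))"
    using \<alpha> w_pos
    by (intro arg_cong2[where f = "(+)"] arg_cong2[where f = "(*)"] sum.cong refl
        shapley_rep_sum_eq[symmetric]) auto
  finally show "shapley_cost q \<alpha> \<sigma> \<xi> N w p i e
          \<le> \<sigma> e + (\<Sum>j=1..q. \<xi> e j * (\<Sum>k=1..2.
                 shapley_rep_z (\<alpha> j) k * rpow (load N p w e - real (w i e)) (shapley_rep_x (\<alpha> j) k)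
                             * rpow (real (w i e)) (shapley_rep_y (\<alpha> j) k)))" .
qed

end
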